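(* (i) Let $f\colon M^{12}\to\mathbb{S}^{13}$ be the minimal Cartan isoparametric hypersurface with $g=3$ distinct principal curvatures, each of multiplicity $4$. Then $f$ satisfies, for every unit tangent vector $X$, $\mathrm{Ric}_M(X)\geq b(12,k,H)$ only for integers $2\leq k\leq 3$; for $k=3$ the inequality holds with equality (attained for some unit vectors), $\lambda(12,3,0)=\sqrt3$ is a principal curvature of multiplicity $4$, and the second fundamental form has the following structure: at every point there is a Dupin principal normal $\eta$ of multiplicity $4$ with $\|\eta\|=\lambda(12,3,0)$ and $\mathrm{Ric}_M(X)=b(12,3,0)$ for every unit $X\in E_\eta$. (ii) Let $f\colon M^{24}\to\mathbb{S}^{25}$ be the minimal Cartan isoparametric hypersurface with $g=3$ distinct principal curvatures, each of multiplicity $8$. Then $f$ satisfies $\mathrm{Ric}_M\geq b(24,k,H)$ only for integers $2\leq k\leq 6$; for $k=6$ with equality, $\lambda(24,6,0)=\sqrt3$ is a principal curvature of multiplicity $8$, and at every point there is a Dupin principal normal $\eta$ of multiplicity $8$ with $\|\eta\|=\lambda(24,6,0)$ and $\mathrm{Ric}_M(X)=b(24,6,0)$ for every unit $X\in E_\eta$.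
   Context: An isoparametric hypersurface of the unit sphere with $g=3$ (Cartan hypersurface) has principal curvatures $\cot\theta,\ \cot(\theta+\pi/3),\ \cot(\theta+2\pi/3)$ for some $\theta\in(0,\pi/2)$, all with the same multiplicity; the minimal one in the family has principal curvatures $\sqrt3,0,-\sqrt3$. Notation: $b(n,k,H)=\frac{n(k-1)}{k}+\frac{n(k-1)H}{2k^2}\big(nH+\sqrt{n^2H^2+4k(n-k)}\big)$, $\lambda(n,k,H)=\frac{1}{2k}\big(nH+\sqrt{n^2H^2+4k(n-k)}\big)$, $H$ the length of the normalized mean curvature vector, $\mathrm{Ric}_M(X)$ the non-normalized Ricci curvature in the unit direction $X$. A Dupin principal normal $\eta$ at $x$ is a normal vector for which $E_\eta(x)=\{X:\alpha_f(X,Y)=\langle X,Y\rangle\eta\ \forall Y\}$ has dimension $\geq 2$ (its multiplicity), $\alpha_f$ the second fundamental form; for a hypersurface this means $\eta=\rho\xi$ with $\rho$ a principal curvature of multiplicity $\geq2$ w.r.t. the unit normal $\xi$. *)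

theory Defs
  imports "HOL-Analysis.Analysis"
begin

text \<open>Pointwise model of a hypersurface f: M^n -> S^(n+1) (unit sphere).
  Tangent space at a point: real^'n with orthonormal basis axis i 1.
  Normal space: spanned by the unit normal xi; a normal vector rho*xi is encoded by rho.
  The second fundamental form is alpha(X,Y) = <A X, Y> xi, A the shape operator.\<close>

definition bnd :: "nat \<Rightarrow> nat \<Rightarrow> real \<Rightarrow> real" where
  "bnd n k H = real n * (real k - 1) / real k
     + real n * (real k - 1) * H / (2 * (real k)\<^sup>2)
       * (real n * H + sqrt ((real n)\<^sup>2 * H\<^sup>2 + 4 * real k * (real n - real k)))"

definition lam :: "nat \<Rightarrow> nat \<Rightarrow> real \<Rightarrow> real" where
  "lam n k H = (real n * H + sqrt ((real n)\<^sup>2 * H\<^sup>2 + 4 * real k * (real n - real k)))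
                / (2 * real k)"

definition shape_operator :: "(real^'n \<Rightarrow> real^'n) \<Rightarrow> bool" where
  "shape_operator A \<longleftrightarrow> linear A \<and> (\<forall>X Y. A X \<bullet> Y = X \<bullet> A Y)"

definition sff :: "(real^'n \<Rightarrow> real^'n) \<Rightarrow> real^'n \<Rightarrow> real^'n \<Rightarrow> real" where
  "sff A X Y = A X \<bullet> Y"

definition mean_curv :: "(real^'n \<Rightarrow> real^'n) \<Rightarrow> real" where
  "mean_curv A = \<bar>(\<Sum>i\<in>UNIV. sff A (axis i 1) (axis i 1)) / real CARD('n)\<bar>"

text \<open>Curvature <R(X,Y)Y,X> of the induced metric, by the Gauss equation
  for a hypersurface of the unit sphere\<close>
definition gauss_curv :: "(real^'n \<Rightarrow> real^'n) \<Rightarrow> real^'n \<Rightarrow> real^'n \<Rightarrow> real" where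
  "gauss_curv A X Y = (X \<bullet> X) * (Y \<bullet> Y) - (X \<bullet> Y)\<^sup>2
      + sff A X X * sff A Y Y - (sff A X Y)\<^sup>2"

definition ricci :: "(real^'n \<Rightarrow> real^'n) \<Rightarrow> real^'n \<Rightarrow> real" where
  "ricci A X = (\<Sum>i\<in>UNIV. gauss_curv A X (axis i 1))"

definition E_normal :: "(real^'n \<Rightarrow> real^'n) \<Rightarrow> real \<Rightarrow> (real^'n) set" where
  "E_normal A \<rho> = {X. \<forall>Y. sff A X Y = (X \<bullet> Y) * \<rho>}"

definition dupin_principal_normal :: "(real^'n \<Rightarrow> real^'n) \<Rightarrow> real \<Rightarrow> bool" where
  "dupin_principal_normal A \<rho> \<longleftrightarrow> dim (E_normal A \<rho>) \<ge> 2"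

definition pc_mult :: "(real^'n \<Rightarrow> real^'n) \<Rightarrow> real \<Rightarrow> nat" where
  "pc_mult A \<rho> = dim {X. A X = \<rho> *\<^sub>R X}"

definition minimal_cartan_sff :: "nat \<Rightarrow> (real^'n \<Rightarrow> real^'n) \<Rightarrow> bool" where
  "minimal_cartan_sff m A \<longleftrightarrow> shape_operator A \<and> CARD('n) = 3 * m \<and>
     pc_mult A (sqrt 3) = m \<and> pc_mult A 0 = m \<and> pc_mult A (- sqrt 3) = m"

end

theory Submission
  imports Defs
begin

(* The shape operator A of the minimal Cartan hypersurface is self-adjoint with eigenvalues
   sqrt 3, 0, -sqrt 3, each of multiplicity m, filling the dimension n = 3 m. In an orthonormal
   eigenbasis its trace is m sqrt 3 - m sqrt 3 = 0, so H = 0, and |A X|^2 <= 3 for unit X. The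
   Gauss equation then gives Ric(X) = n - 1 - |A X|^2 >= n - 4, with equality on the
   sqrt 3-eigenspace. As b(n,k,0) = n (k - 1) / k, the bound b(n,k,0) <= n - 4 holds iff 4 k <= n;
   for n = 4 k (12 = 4 * 3, 24 = 4 * 6) moreover b(n,k,0) = n - 4 and lambda(n,k,0) = sqrt 3, and the
   Dupin principal normal is sqrt 3 times the unit normal, with E_eta the sqrt 3-eigenspace. *)

lemma inner_eq_sum_orthonormal_basis:
  fixes B :: "'a::euclidean_space set"
  assumes "finite B" "pairwise orthogonal B" "\<And>u. u \<in> B \<Longrightarrow> norm u = 1" "span B = UNIV"
  shows "x \<bullet> y = (\<Sum>u\<in>B. (x \<bullet> u) * (y \<bullet> u))"
proof -
  have "x \<bullet> y = (\<Sum>u\<in>B. (x \<bullet> u) *\<^sub>R u) \<bullet> y"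
    using orthonormal_basis_expand[of B x] assms by simp
  also have "\<dots> = (\<Sum>u\<in>B. (x \<bullet> u) * (y \<bullet> u))"
    by (simp add: inner_sum_left) (rule sum.cong, auto simp: inner_commute)
  finally show ?thesis .
qed

lemma inner_eq_sum_axis:
  fixes x y :: "real^'n"
  shows "x \<bullet> y = (\<Sum>i\<in>UNIV. (x \<bullet> axis i 1) * (y \<bullet> axis i 1))"
  unfolding inner_axis by (simp add: inner_vec_def)

lemma subspace_eigenspace:
  assumes "linear A"
  shows "subspace {X. A X = c *\<^sub>R X}"
  using assms by (auto simp: subspace_def linear_add linear_scale linear_0 algebra_simps)

lemma self_adjoint_eigenvectors_orthogonal:
  assumes "\<And>X Y. A X \<bullet> Y = X \<bullet> A Y" "A u = a *\<^sub>R u" "A v = b *\<^sub>R v" "a \<noteq> b"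
  shows "orthogonal u v"
proof -
  have "a * (u \<bullet> v) = b * (u \<bullet> v)"
    using assms(1)[of u v] assms(2,3) by simp
  then show ?thesis
    using assms(4) by (simp add: orthogonal_def)
qed

lemma E_normal_eq_eigenspace: "E_normal A \<rho> = {X. A X = \<rho> *\<^sub>R X}"
proof -
  have "(\<forall>Y. A X \<bullet> Y = (X \<bullet> Y) * \<rho>) \<longleftrightarrow> A X = \<rho> *\<^sub>R X" for X
  proof
    assume "\<forall>Y. A X \<bullet> Y = (X \<bullet> Y) * \<rho>"
    then have "(A X - \<rho> *\<^sub>R X) \<bullet> (A X - \<rho> *\<^sub>R X) = 0"
      by (simp add: inner_diff_left)
    then show "A X = \<rho> *\<^sub>R X"
      by simp
  qed simp
  then show ?thesis
    unfolding E_normal_def sff_def by auto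
qed

lemma orthonormal_eigenbases:
  fixes A :: "real^'n \<Rightarrow> real^'n"
  assumes "linear A"
  obtains E where "\<And>c. E c \<subseteq> {X. A X = c *\<^sub>R X}" "\<And>c. pairwise orthogonal (E c)"
    "\<And>c u. u \<in> E c \<Longrightarrow> norm u = 1" "\<And>c. finite (E c)" "\<And>c. card (E c) = pc_mult A c"
proof -
  have "\<forall>c. \<exists>Bc. Bc \<subseteq> {X. A X = c *\<^sub>R X} \<and> pairwise orthogonal Bc
      \<and> (\<forall>u\<in>Bc. norm u = 1) \<and> finite Bc \<and> card Bc = pc_mult A c"
  proof
    fix c
    obtain Bc where "Bc \<subseteq> {X. A X = c *\<^sub>R X}" "pairwise orthogonal Bc"
      "\<And>u. u \<in> Bc \<Longrightarrow> norm u = 1" "independent Bc" "card Bc = dim {X. A X = c *\<^sub>R X}"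
      "span Bc = {X. A X = c *\<^sub>R X}"
      using orthonormal_basis_subspace[OF subspace_eigenspace[OF assms, of c]] by blast
    then show "\<exists>Bc. Bc \<subseteq> {X. A X = c *\<^sub>R X} \<and> pairwise orthogonal Bc
        \<and> (\<forall>u\<in>Bc. norm u = 1) \<and> finite Bc \<and> card Bc = pc_mult A c"
      unfolding pc_mult_def using independent_imp_finite by blast
  qed
  from choice[OF this] obtain E where E: "\<forall>c. E c \<subseteq> {X. A X = c *\<^sub>R X} \<and> pairwise orthogonal (E c)
      \<and> (\<forall>u\<in>E c. norm u = 1) \<and> finite (E c) \<and> card (E c) = pc_mult A c"
    by blast
  show thesis
    by (rule that[of E]) (use E in blast)+
qed

lemma shape_operator_eigenbasis:
  fixes A :: "real^'n \<Rightarrow> real^'n"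
  assumes A: "shape_operator A" and fin: "finite \<Lambda>"
    and dims: "(\<Sum>c\<in>\<Lambda>. pc_mult A c) = CARD('n)"
  obtains B where "finite B" "pairwise orthogonal B" "\<And>u. u \<in> B \<Longrightarrow> norm u = 1"
    "span B = UNIV" "\<And>u. u \<in> B \<Longrightarrow> A u = (A u \<bullet> u) *\<^sub>R u"
    "\<And>u. u \<in> B \<Longrightarrow> A u \<bullet> u \<in> \<Lambda>" "\<And>c. c \<in> \<Lambda> \<Longrightarrow> card {u \<in> B. A u \<bullet> u = c} = pc_mult A c"
proof -
  have lin: "linear A" and sa: "\<And>X Y. A X \<bullet> Y = X \<bullet> A Y"
    using A by (auto simp: shape_operator_def)
  obtain E where E_eig: "\<And>c. E c \<subseteq> {X. A X = c *\<^sub>R X}" and E_orth: "\<And>c. pairwise orthogonal (E c)"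
    and E_unit: "\<And>c u. u \<in> E c \<Longrightarrow> norm u = 1" and E_fin: "\<And>c. finite (E c)"
    and E_card: "\<And>c. card (E c) = pc_mult A c"
    using orthonormal_eigenbases[OF lin] by blast
  have eigenvector: "A u = c *\<^sub>R u" if "u \<in> E c" for u c
    using E_eig that by blast
  have rayleigh: "A u \<bullet> u = c" if "u \<in> E c" for u c
    using eigenvector[OF that] E_unit[OF that] by (simp add: norm_eq_1)
  define B where "B = (\<Union>c\<in>\<Lambda>. E c)"
  have orthB: "pairwise orthogonal B"
    unfolding B_def pairwise_def
  proof (clarsimp)
    fix c d u v assume u: "u \<in> E c" and v: "v \<in> E d" and "u \<noteq> v"
    show "orthogonal u v"
    proof (cases "c = d")
      case True
      then show ?thesis
        using E_orth[of c] u v \<open>u \<noteq> v\<close> by (auto simp: pairwise_def)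
    next
      case False
      then show ?thesis
        by (rule self_adjoint_eigenvectors_orthogonal[OF sa eigenvector[OF u] eigenvector[OF v]])
    qed
  qed
  have unitB: "norm u = 1" if "u \<in> B" for u
    using that E_unit unfolding B_def by blast
  have finB: "finite B"
    unfolding B_def using fin E_fin by blast
  \<comment> \<open>the \<open>E c\<close> are disjoint because \<open>A u \<bullet> u\<close> determines \<open>c\<close>\<close>
  have "card B = (\<Sum>c\<in>\<Lambda>. card (E c))"
    unfolding B_def using fin E_fin rayleigh by (intro card_UN_disjoint) blast+
  then have "card B = dim (UNIV :: (real^'n) set)"
    using dims E_card by simp
  moreover have "independent B"
    using pairwise_orthogonal_independent[OF orthB] unitB by force
  ultimately have spanB: "span B = UNIV"
    using card_eq_dim[of B UNIV] finB by auto
  show thesis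
  proof
    fix u assume "u \<in> B"
    then obtain c where c: "c \<in> \<Lambda>" "u \<in> E c"
      unfolding B_def by blast
    show "A u = (A u \<bullet> u) *\<^sub>R u"
      unfolding rayleigh[OF c(2)] by (rule eigenvector[OF c(2)])
    show "A u \<bullet> u \<in> \<Lambda>"
      unfolding rayleigh[OF c(2)] by (rule c(1))
  next
    fix c assume "c \<in> \<Lambda>"
    then have "{u \<in> B. A u \<bullet> u = c} = E c"
      unfolding B_def using rayleigh by auto
    then show "card {u \<in> B. A u \<bullet> u = c} = pc_mult A c"
      by (simp add: E_card)
  qed (use finB orthB unitB spanB in auto)
qed

lemma trace_shape_operator_eq_sum_eigenvalues:
  fixes A :: "real^'n \<Rightarrow> real^'n"
  assumes A: "shape_operator A" and fin: "finite \<Lambda>"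
    and dims: "(\<Sum>c\<in>\<Lambda>. pc_mult A c) = CARD('n)"
  shows "(\<Sum>i\<in>UNIV. A (axis i 1) \<bullet> axis i 1) = (\<Sum>c\<in>\<Lambda>. c * pc_mult A c)"
proof -
  obtain B where finB: "finite B" and onb: "pairwise orthogonal B" "\<And>u. u \<in> B \<Longrightarrow> norm u = 1"
      "span B = UNIV" and "\<And>u. u \<in> B \<Longrightarrow> A u = (A u \<bullet> u) *\<^sub>R u"
    and eigenvalue_mem: "\<And>u. u \<in> B \<Longrightarrow> A u \<bullet> u \<in> \<Lambda>"
    and mult: "\<And>c. c \<in> \<Lambda> \<Longrightarrow> card {u \<in> B. A u \<bullet> u = c} = pc_mult A c"
    using shape_operator_eigenbasis[OF assms] by blast
  have sa: "A X \<bullet> Y = X \<bullet> A Y" for X Y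
    using A by (simp add: shape_operator_def)
  have "(\<Sum>i\<in>UNIV. A (axis i 1) \<bullet> axis i 1)
      = (\<Sum>i\<in>UNIV. \<Sum>u\<in>B. (A (axis i 1) \<bullet> u) * (axis i 1 \<bullet> u))"
    by (intro sum.cong refl inner_eq_sum_orthonormal_basis[OF finB onb])
  also have "\<dots> = (\<Sum>u\<in>B. \<Sum>i\<in>UNIV. (A u \<bullet> axis i 1) * (u \<bullet> axis i 1))"
    by (subst sum.swap) (intro sum.cong refl, metis sa inner_commute)
  also have "\<dots> = (\<Sum>u\<in>B. A u \<bullet> u)"
    by (simp add: inner_eq_sum_axis[symmetric])
  also have "\<dots> = (\<Sum>c\<in>\<Lambda>. \<Sum>u\<in>{u \<in> B. A u \<bullet> u = c}. A u \<bullet> u)"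
    using finB fin eigenvalue_mem by (intro sum.group[symmetric]) auto
  also have "\<dots> = (\<Sum>c\<in>\<Lambda>. c * pc_mult A c)"
    using mult by (intro sum.cong) auto
  finally show ?thesis .
qed

lemma shape_operator_inner_self_le:
  fixes A :: "real^'n \<Rightarrow> real^'n"
  assumes A: "shape_operator A" and fin: "finite \<Lambda>"
    and dims: "(\<Sum>c\<in>\<Lambda>. pc_mult A c) = CARD('n)"
    and bound: "\<And>c. c \<in> \<Lambda> \<Longrightarrow> c\<^sup>2 \<le> K"
  shows "A X \<bullet> A X \<le> K * (X \<bullet> X)"
proof -
  obtain B where finB: "finite B" and onb: "pairwise orthogonal B" "\<And>u. u \<in> B \<Longrightarrow> norm u = 1"
      "span B = UNIV" and eigenvector: "\<And>u. u \<in> B \<Longrightarrow> A u = (A u \<bullet> u) *\<^sub>R u"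
    and eigenvalue_mem: "\<And>u. u \<in> B \<Longrightarrow> A u \<bullet> u \<in> \<Lambda>"
    and "\<And>c. c \<in> \<Lambda> \<Longrightarrow> card {u \<in> B. A u \<bullet> u = c} = pc_mult A c"
    using shape_operator_eigenbasis[OF A fin dims] by blast
  note parseval = inner_eq_sum_orthonormal_basis[OF finB onb]
  have sa: "A X \<bullet> Y = X \<bullet> A Y" for X Y
    using A by (simp add: shape_operator_def)
  have "A X \<bullet> A X = (\<Sum>u\<in>B. (A X \<bullet> u) * (A X \<bullet> u))"
    by (rule parseval)
  also have "\<dots> = (\<Sum>u\<in>B. (A u \<bullet> u)\<^sup>2 * (X \<bullet> u)\<^sup>2)"
  proof (intro sum.cong refl)
    fix u assume "u \<in> B"
    then have "A X \<bullet> u = (A u \<bullet> u) * (X \<bullet> u)"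
      using eigenvector[of u] by (metis inner_scaleR_right sa)
    then show "(A X \<bullet> u) * (A X \<bullet> u) = (A u \<bullet> u)\<^sup>2 * (X \<bullet> u)\<^sup>2"
      by (simp add: power2_eq_square)
  qed
  also have "\<dots> \<le> (\<Sum>u\<in>B. K * (X \<bullet> u)\<^sup>2)"
    using bound eigenvalue_mem by (intro sum_mono mult_right_mono) auto
  also have "\<dots> = K * (X \<bullet> X)"
    by (simp add: parseval[of X X] sum_distrib_left power2_eq_square)
  finally show ?thesis .
qed

lemma ricci_eq_trace:
  fixes A :: "real^'n \<Rightarrow> real^'n"
  shows "ricci A X = (real CARD('n) - 1) * (X \<bullet> X)
    + (A X \<bullet> X) * (\<Sum>i\<in>UNIV. A (axis i 1) \<bullet> axis i 1) - A X \<bullet> A X"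
proof -
  have "ricci A X = (\<Sum>i\<in>UNIV. X \<bullet> X - (X \<bullet> axis i 1)\<^sup>2
      + (A X \<bullet> X) * (A (axis i 1) \<bullet> axis i 1) - (A X \<bullet> axis i 1)\<^sup>2)"
    unfolding ricci_def gauss_curv_def sff_def by (simp add: inner_axis_axis)
  also have "\<dots> = real CARD('n) * (X \<bullet> X) - (\<Sum>i\<in>UNIV. (X \<bullet> axis i 1)\<^sup>2)
      + (A X \<bullet> X) * (\<Sum>i\<in>UNIV. A (axis i 1) \<bullet> axis i 1) - (\<Sum>i\<in>UNIV. (A X \<bullet> axis i 1)\<^sup>2)"
    by (simp add: sum.distrib sum_subtractf sum_distrib_left)
  also have "\<dots> = (real CARD('n) - 1) * (X \<bullet> X)
      + (A X \<bullet> X) * (\<Sum>i\<in>UNIV. A (axis i 1) \<bullet> axis i 1) - A X \<bullet> A X"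
    by (simp add: power2_eq_square inner_eq_sum_axis[symmetric] left_diff_distrib)
  finally show ?thesis .
qed

lemma sum_pc_mult_minimal_cartan:
  fixes A :: "real^'n \<Rightarrow> real^'n"
  assumes "minimal_cartan_sff m A"
  shows "(\<Sum>c\<in>{sqrt 3, 0, - sqrt 3}. pc_mult A c) = CARD('n)"
  using assms by (simp add: minimal_cartan_sff_def)

lemma trace_minimal_cartan_eq_0:
  fixes A :: "real^'n \<Rightarrow> real^'n"
  assumes "minimal_cartan_sff m A"
  shows "(\<Sum>i\<in>UNIV. A (axis i 1) \<bullet> axis i 1) = 0"
proof -
  have "shape_operator A"
    using assms by (simp add: minimal_cartan_sff_def)
  from trace_shape_operator_eq_sum_eigenvalues[OF this _ sum_pc_mult_minimal_cartan[OF assms]]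
  show ?thesis
    using assms by (simp add: minimal_cartan_sff_def)
qed

lemma mean_curv_minimal_cartan:
  assumes "minimal_cartan_sff m A"
  shows "mean_curv A = 0"
  using trace_minimal_cartan_eq_0[OF assms] by (simp add: mean_curv_def sff_def)

lemma ricci_minimal_cartan:
  fixes A :: "real^'n \<Rightarrow> real^'n"
  assumes "minimal_cartan_sff m A" and "norm X = 1"
  shows "ricci A X = real CARD('n) - 1 - A X \<bullet> A X"
  using assms(2) by (simp add: ricci_eq_trace trace_minimal_cartan_eq_0[OF assms(1)] norm_eq_1)

lemma ricci_minimal_cartan_ge:
  fixes A :: "real^'n \<Rightarrow> real^'n"
  assumes "minimal_cartan_sff m A" and "norm X = 1"
  shows "real CARD('n) - 4 \<le> ricci A X"
proof -
  have "shape_operator A"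
    using assms by (simp add: minimal_cartan_sff_def)
  then have "A X \<bullet> A X \<le> 3 * (X \<bullet> X)"
    by (rule shape_operator_inner_self_le[OF _ _ sum_pc_mult_minimal_cartan[OF assms(1)]]) auto
  then show ?thesis
    using assms by (simp add: ricci_minimal_cartan norm_eq_1)
qed

lemma ricci_minimal_cartan_eigenvector:
  fixes A :: "real^'n \<Rightarrow> real^'n"
  assumes "minimal_cartan_sff m A" and "norm X = 1" and "A X = sqrt 3 *\<^sub>R X"
  shows "ricci A X = real CARD('n) - 4"
  using assms by (simp add: ricci_minimal_cartan norm_eq_1)

lemma minimal_cartan_unit_eigenvector:
  fixes A :: "real^'n \<Rightarrow> real^'n"
  assumes "minimal_cartan_sff m A" and "0 < m"
  obtains X where "norm X = 1" "A X = sqrt 3 *\<^sub>R X"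
proof -
  have "linear A" and "pc_mult A (sqrt 3) = m"
    using assms(1) by (simp_all add: minimal_cartan_sff_def shape_operator_def)
  then obtain B where "B \<subseteq> {X. A X = sqrt 3 *\<^sub>R X}" "\<And>X. X \<in> B \<Longrightarrow> norm X = 1" "card B = m"
    using orthonormal_basis_subspace[OF subspace_eigenspace] unfolding pc_mult_def by metis
  moreover have "B \<noteq> {}"
    using \<open>card B = m\<close> \<open>0 < m\<close> by auto
  ultimately show thesis
    using that by blast
qed

lemma minimal_cartan_dupin_principal_normal:
  fixes A :: "real^'n \<Rightarrow> real^'n"
  assumes A: "minimal_cartan_sff m A" and "2 \<le> m"
  shows "dupin_principal_normal A (sqrt 3)" and "dim (E_normal A (sqrt 3)) = m"
    and "\<And>X. X \<in> E_normal A (sqrt 3) \<Longrightarrow> norm X = 1 \<Longrightarrow> ricci A X = real CARD('n) - 4"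
proof -
  show "dim (E_normal A (sqrt 3)) = m"
    using A by (simp add: E_normal_eq_eigenspace pc_mult_def minimal_cartan_sff_def)
  then show "dupin_principal_normal A (sqrt 3)"
    using \<open>2 \<le> m\<close> by (simp add: dupin_principal_normal_def)
  show "ricci A X = real CARD('n) - 4" if "X \<in> E_normal A (sqrt 3)" and "norm X = 1" for X
    using ricci_minimal_cartan_eigenvector[OF A] that by (simp add: E_normal_eq_eigenspace)
qed

lemma bnd_zero_le_iff:
  assumes "0 < k"
  shows "bnd n k 0 \<le> real n - 4 \<longleftrightarrow> 4 * k \<le> n"
proof -
  have "bnd n k 0 \<le> real n - 4 \<longleftrightarrow> real n * (real k - 1) \<le> (real n - 4) * real k"
    using assms by (simp add: bnd_def divide_le_eq)
  also have "\<dots> \<longleftrightarrow> real (4 * k) \<le> real n"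
    by (simp add: algebra_simps)
  also have "\<dots> \<longleftrightarrow> 4 * k \<le> n"
    by (rule of_nat_le_iff)
  finally show ?thesis .
qed

lemma bnd_zero_eq:
  assumes "n = 4 * k" and "0 < k"
  shows "bnd n k 0 = real n - 4"
  using assms by (simp add: bnd_def field_simps)

lemma lam_zero_eq_sqrt3:
  assumes "n = 4 * k" and "0 < k"
  shows "lam n k 0 = sqrt 3"
proof -
  have radicand: "4 * real k * (real n - real k) = (2 * real k)\<^sup>2 * 3"
    using assms(1) by (simp add: power2_eq_square algebra_simps)
  have "sqrt (4 * real k * (real n - real k)) = sqrt ((2 * real k)\<^sup>2) * sqrt 3"
    unfolding radicand by (rule real_sqrt_mult)
  also have "\<dots> = 2 * real k * sqrt 3"
    by (simp only: real_sqrt_abs abs_of_nonneg)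
  finally show ?thesis
    using assms(2) by (simp add: lam_def)
qed

lemma ricci_minimal_cartan_ge_bnd_iff:
  fixes A :: "real^'n \<Rightarrow> real^'n"
  assumes A: "minimal_cartan_sff m A" and "0 < m" and "0 < k"
  shows "(\<forall>X. norm X = 1 \<longrightarrow> bnd CARD('n) k (mean_curv A) \<le> ricci A X) \<longleftrightarrow> 4 * k \<le> CARD('n)"
proof -
  obtain X0 where X0: "norm X0 = 1" "A X0 = sqrt 3 *\<^sub>R X0"
    using minimal_cartan_unit_eigenvector[OF A \<open>0 < m\<close>] .
  have "(\<forall>X. norm X = 1 \<longrightarrow> bnd CARD('n) k 0 \<le> ricci A X)
      \<longleftrightarrow> bnd CARD('n) k 0 \<le> real CARD('n) - 4"
  proof
    assume "\<forall>X. norm X = 1 \<longrightarrow> bnd CARD('n) k 0 \<le> ricci A X"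
    then have "bnd CARD('n) k 0 \<le> ricci A X0"
      using X0(1) by blast
    then show "bnd CARD('n) k 0 \<le> real CARD('n) - 4"
      by (simp add: ricci_minimal_cartan_eigenvector[OF A X0])
  next
    assume "bnd CARD('n) k 0 \<le> real CARD('n) - 4"
    then show "\<forall>X. norm X = 1 \<longrightarrow> bnd CARD('n) k 0 \<le> ricci A X"
      using ricci_minimal_cartan_ge[OF A] by (blast intro: order.trans)
  qed
  then show ?thesis
    by (simp add: mean_curv_minimal_cartan[OF A] bnd_zero_le_iff[OF \<open>0 < k\<close>])
qed

lemma minimal_cartan_sharp_ricci_bound:
  fixes M :: "'p set" and S :: "'p \<Rightarrow> real^'a \<Rightarrow> real^'a"
  assumes "M \<noteq> {}" and "CARD('a) = n" and cartan: "\<forall>x\<in>M. minimal_cartan_sff m (S x)"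
    and "n = 4 * k0" and "0 < k0"
  shows
   "((\<forall>k::nat. 2 \<le> k \<longrightarrow>
        ((\<forall>x\<in>M. \<forall>X. norm X = 1 \<longrightarrow> ricci (S x) X \<ge> bnd n k (mean_curv (S x)))
          \<longleftrightarrow> k \<le> k0))
     \<and> (\<forall>x\<in>M. \<exists>X. norm X = 1 \<and> ricci (S x) X = bnd n k0 (mean_curv (S x)))
     \<and> lam n k0 0 = sqrt 3
     \<and> (\<forall>x\<in>M. pc_mult (S x) (lam n k0 0) = m)
     \<and> (\<forall>x\<in>M. \<exists>\<rho>. dupin_principal_normal (S x) \<rho> \<and> dim (E_normal (S x) \<rho>) = m
            \<and> \<bar>\<rho>\<bar> = lam n k0 0
            \<and> (\<forall>X\<in>E_normal (S x) \<rho>. norm X = 1 \<longrightarrow> ricci (S x) X = bnd n k0 0)))"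
proof -
  note cartan_at = cartan[rule_format]
  have lam: "lam n k0 0 = sqrt 3" and bnd: "bnd n k0 0 = real n - 4"
    using lam_zero_eq_sqrt3 bnd_zero_eq assms(4,5) by blast+
  obtain x0 where "x0 \<in> M"
    using \<open>M \<noteq> {}\<close> by blast
  then have "3 * m = n"
    using cartan_at assms(2) by (simp add: minimal_cartan_sff_def)
  then have "2 \<le> m"
    using assms(4,5) by linarith
  have ricci_iff: "(\<forall>x\<in>M. \<forall>X. norm X = 1 \<longrightarrow> bnd n k (mean_curv (S x)) \<le> ricci (S x) X)
      \<longleftrightarrow> k \<le> k0" if "2 \<le> k" for k
  proof -
    have "(\<forall>X. norm X = 1 \<longrightarrow> bnd n k (mean_curv (S x)) \<le> ricci (S x) X) \<longleftrightarrow> k \<le> k0"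
      if x: "x \<in> M" for x
      using ricci_minimal_cartan_ge_bnd_iff[OF cartan_at[OF x], of k] \<open>2 \<le> m\<close> \<open>2 \<le> k\<close> assms(2,4)
      by simp
    then show ?thesis
      using \<open>M \<noteq> {}\<close> by blast
  qed
  have attained: "\<exists>X. norm X = 1 \<and> ricci (S x) X = bnd n k0 (mean_curv (S x))" if x: "x \<in> M" for x
  proof -
    obtain X where "norm X = 1" "S x X = sqrt 3 *\<^sub>R X"
      using minimal_cartan_unit_eigenvector[OF cartan_at[OF x]] \<open>2 \<le> m\<close> by auto
    then show ?thesis
      using ricci_minimal_cartan_eigenvector[OF cartan_at[OF x]] mean_curv_minimal_cartan[OF cartan_at[OF x]]
        bnd assms(2) by auto
  qed
  have pc: "pc_mult (S x) (sqrt 3) = m" if x: "x \<in> M" for x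
    using cartan_at[OF x] by (simp add: minimal_cartan_sff_def)
  have dupin: "\<exists>\<rho>. dupin_principal_normal (S x) \<rho> \<and> dim (E_normal (S x) \<rho>) = m
      \<and> \<bar>\<rho>\<bar> = sqrt 3 \<and> (\<forall>X\<in>E_normal (S x) \<rho>. norm X = 1 \<longrightarrow> ricci (S x) X = bnd n k0 0)"
    if x: "x \<in> M" for x
    using minimal_cartan_dupin_principal_normal[OF cartan_at[OF x] \<open>2 \<le> m\<close>] bnd assms(2)
    by (intro exI[of _ "sqrt 3"]) auto
  show ?thesis
    unfolding lam using ricci_iff attained pc dupin by blast
qed

theorem proposition9:
  fixes M1 :: "'p set" and S1 :: "'p \<Rightarrow> real^'a \<Rightarrow> real^'a"
    and M2 :: "'q set" and S2 :: "'q \<Rightarrow> real^'b \<Rightarrow> real^'b"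
  assumes "M1 \<noteq> {}" and "CARD('a) = 12" and "\<forall>x\<in>M1. minimal_cartan_sff 4 (S1 x)"
    and "M2 \<noteq> {}" and "CARD('b) = 24" and "\<forall>x\<in>M2. minimal_cartan_sff 8 (S2 x)"
  shows
   "((\<forall>k::nat. 2 \<le> k \<longrightarrow>
        ((\<forall>x\<in>M1. \<forall>X. norm X = 1 \<longrightarrow> ricci (S1 x) X \<ge> bnd 12 k (mean_curv (S1 x)))
          \<longleftrightarrow> k \<le> 3))
     \<and> (\<forall>x\<in>M1. \<exists>X. norm X = 1 \<and> ricci (S1 x) X = bnd 12 3 (mean_curv (S1 x)))
     \<and> lam 12 3 0 = sqrt 3
     \<and> (\<forall>x\<in>M1. pc_mult (S1 x) (lam 12 3 0) = 4)
     \<and> (\<forall>x\<in>M1. \<exists>\<rho>. dupin_principal_normal (S1 x) \<rho> \<and> dim (E_normal (S1 x) \<rho>) = 4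
            \<and> \<bar>\<rho>\<bar> = lam 12 3 0
            \<and> (\<forall>X\<in>E_normal (S1 x) \<rho>. norm X = 1 \<longrightarrow> ricci (S1 x) X = bnd 12 3 0)))
    \<and>
    ((\<forall>k::nat. 2 \<le> k \<longrightarrow>
        ((\<forall>x\<in>M2. \<forall>X. norm X = 1 \<longrightarrow> ricci (S2 x) X \<ge> bnd 24 k (mean_curv (S2 x)))
          \<longleftrightarrow> k \<le> 6))
     \<and> (\<forall>x\<in>M2. \<exists>X. norm X = 1 \<and> ricci (S2 x) X = bnd 24 6 (mean_curv (S2 x)))
     \<and> lam 24 6 0 = sqrt 3
     \<and> (\<forall>x\<in>M2. pc_mult (S2 x) (lam 24 6 0) = 8)
     \<and> (\<forall>x\<in>M2. \<exists>\<rho>. dupin_principal_normal (S2 x) \<rho> \<and> dim (E_normal (S2 x) \<rho>) = 8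
            \<and> \<bar>\<rho>\<bar> = lam 24 6 0
            \<and> (\<forall>X\<in>E_normal (S2 x) \<rho>. norm X = 1 \<longrightarrow> ricci (S2 x) X = bnd 24 6 0)))"
  by (rule conjI; rule minimal_cartan_sharp_ricci_bound[OF assms(1-3)]
      minimal_cartan_sharp_ricci_bound[OF assms(4-6)]; simp)

end
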